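(* Let $Q$ be a quiver and let $C\subseteq \Bbbk Q$ be a monomial subcoalgebra. If $C$ is left f-qcF, then $C$ is left qcF.
   Context: $\Bbbk$ is a field. The path coalgebra $\Bbbk Q$ of a quiver $Q$ has as basis all paths of $Q$ (including the trivial paths, identified with the vertices), with $\Delta(p)=\sum_{xy=p}x\otimes y$ (where $xy$ is the concatenation of $x$ followed by $y$) and $\varepsilon(p)=1$ if $p$ is trivial, $0$ otherwise. A subcoalgebra $C\subseteq \Bbbk Q$ is monomial if it contains all vertices and arrows of $Q$ and has a linear basis consisting of paths. For a coalgebra $C$, the dual algebra $C^*$ has product $(fg)(x)=\sum f(x_1)g(x_2)$; a right $C$-comodule $M$ (coaction $m\mapsto\sum m_0\otimes m_1$) is a left $C^*$-module via $f\rightharpoonup m=\sum m_0f(m_1)$; in particular $C$ is a left $C^*$-module via $f\rightharpoonup x=\sum x_1 f(x_2)$. $C$ is left quasi-coFrobenius (left qcF) if $C$ embeds, as a left $C^*$-module, in a free left $C^*$-module. $C$ is left f-qcF if every finite dimensional right $C$-comodule embeds, as a left $C^*$-module, in a free left $C^*$-module. *)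

theory Defs
  imports Main
begin

(* A path is a pair (v, [a1,...,an]) : start vertex and
   list of arrows; the trivial path at v is (v, []). *)

type_synonym ('v,'e) path = "'v \<times> 'e list"

definition valid_path :: "('e \<Rightarrow> 'v) \<Rightarrow> ('e \<Rightarrow> 'v) \<Rightarrow> ('v,'e) path \<Rightarrow> bool" where
  "valid_path src tgt p \<longleftrightarrow>
     (case snd p of [] \<Rightarrow> True | a # _ \<Rightarrow> src a = fst p) \<and>
     (\<forall>i. Suc i < length (snd p) \<longrightarrow> tgt (snd p ! i) = src (snd p ! Suc i))"

definition path_end :: "('e \<Rightarrow> 'v) \<Rightarrow> ('v,'e) path \<Rightarrow> 'v" where
  "path_end tgt p = (if snd p = [] then fst p else tgt (last (snd p)))"

(* concatenation x y (x followed by y), meaningful when path_end x = start of y *)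
definition path_cat :: "('v,'e) path \<Rightarrow> ('v,'e) path \<Rightarrow> ('v,'e) path" where
  "path_cat x y = (fst x, snd x @ snd y)"

(* The path coalgebra kQ: finitely supported k-valued functions on the paths of Q
   (the function x corresponds to sum_p x(p) p). *)
definition path_coalg :: "('e \<Rightarrow> 'v) \<Rightarrow> ('e \<Rightarrow> 'v) \<Rightarrow> (('v,'e) path \<Rightarrow> 'k::field) set" where
  "path_coalg src tgt = {x. finite {p. x p \<noteq> 0} \<and> (\<forall>p. x p \<noteq> 0 \<longrightarrow> valid_path src tgt p)}"

definition path_vec :: "('v,'e) path \<Rightarrow> (('v,'e) path \<Rightarrow> 'k::field)" where
  "path_vec p = (\<lambda>q. if q = p then 1 else 0)"

(* Comultiplication, with kQ (x) kQ realised as finitely supported functions on pairs of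
   paths:  Delta(p) = sum_{xy = p} x (x) y. *)
definition comult :: "('e \<Rightarrow> 'v) \<Rightarrow> ('e \<Rightarrow> 'v) \<Rightarrow> (('v,'e) path \<Rightarrow> 'k::field)
     \<Rightarrow> (('v,'e) path \<times> ('v,'e) path \<Rightarrow> 'k)" where
  "comult src tgt x = (\<lambda>(a,b). if valid_path src tgt a \<and> valid_path src tgt b \<and> path_end tgt a = fst b
                               then x (path_cat a b) else 0)"

definition counit :: "(('v,'e) path \<Rightarrow> 'k::field) \<Rightarrow> 'k" where
  "counit x = (\<Sum>v\<in>{v. x (v, []) \<noteq> 0}. x (v, []))"

definition tens :: "('a \<Rightarrow> 'k::field) \<Rightarrow> ('b \<Rightarrow> 'k) \<Rightarrow> ('a \<times> 'b \<Rightarrow> 'k)" where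
  "tens u v = (\<lambda>(a,b). u a * v b)"

definition tens_sum :: "(('a \<Rightarrow> 'k::field) \<times> ('b \<Rightarrow> 'k)) list \<Rightarrow> ('a \<times> 'b \<Rightarrow> 'k)" where
  "tens_sum ps = (\<lambda>z. \<Sum>(u,v)\<leftarrow>ps. tens u v z)"

definition subspace_of :: "('a \<Rightarrow> 'k::field) set \<Rightarrow> ('a \<Rightarrow> 'k) set \<Rightarrow> bool" where
  "subspace_of C V \<longleftrightarrow> C \<subseteq> V \<and> (\<lambda>_. 0) \<in> C \<and>
     (\<forall>x\<in>C. \<forall>y\<in>C. (\<lambda>p. x p + y p) \<in> C) \<and> (\<forall>c. \<forall>x\<in>C. (\<lambda>p. c * x p) \<in> C)"

definition subcoalgebra :: "('e \<Rightarrow> 'v) \<Rightarrow> ('e \<Rightarrow> 'v) \<Rightarrow> (('v,'e) path \<Rightarrow> 'k::field) set \<Rightarrow> bool" where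
  "subcoalgebra src tgt C \<longleftrightarrow> subspace_of C (path_coalg src tgt) \<and>
     (\<forall>x\<in>C. \<exists>ps. set ps \<subseteq> C \<times> C \<and> comult src tgt x = tens_sum ps)"

(* monomial subcoalgebra: contains all vertices and arrows, and has a linear basis B
   consisting of paths, i.e. C is the linear span of B (= functions supported in B). *)
definition monomial_subcoalgebra :: "('e \<Rightarrow> 'v) \<Rightarrow> ('e \<Rightarrow> 'v) \<Rightarrow> (('v,'e) path \<Rightarrow> 'k::field) set \<Rightarrow> bool" where
  "monomial_subcoalgebra src tgt C \<longleftrightarrow> subcoalgebra src tgt C \<and>
     (\<forall>v. path_vec (v, []) \<in> C) \<and> (\<forall>a. path_vec (src a, [a]) \<in> C) \<and>
     (\<exists>B. B \<subseteq> {p. valid_path src tgt p} \<and>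
          C = {x \<in> path_coalg src tgt. \<forall>p. x p \<noteq> 0 \<longrightarrow> p \<in> B})"

(* The dual C^*: k-linear functionals on C (extended by 0 outside C). *)
definition dual :: "('a \<Rightarrow> 'k::field) set \<Rightarrow> (('a \<Rightarrow> 'k) \<Rightarrow> 'k) set" where
  "dual C = {f. (\<forall>x\<in>C. \<forall>y\<in>C. f (\<lambda>p. x p + y p) = f x + f y) \<and>
                (\<forall>c. \<forall>x\<in>C. f (\<lambda>p. c * x p) = c * f x) \<and>
                (\<forall>x. x \<notin> C \<longrightarrow> f x = 0)}"

(* product in C^*: (fg)(x) = sum f(x1) g(x2) (computed from any representation of Delta(x)
   in C (x) C; well defined for a subcoalgebra C) *)
definition conv :: "('e \<Rightarrow> 'v) \<Rightarrow> ('e \<Rightarrow> 'v) \<Rightarrow> (('v,'e) path \<Rightarrow> 'k::field) set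
     \<Rightarrow> ((('v,'e) path \<Rightarrow> 'k) \<Rightarrow> 'k) \<Rightarrow> ((('v,'e) path \<Rightarrow> 'k) \<Rightarrow> 'k) \<Rightarrow> ((('v,'e) path \<Rightarrow> 'k) \<Rightarrow> 'k)" where
  "conv src tgt C f g = (\<lambda>x. if x \<in> C then
      (SOME r. \<exists>ps. set ps \<subseteq> C \<times> C \<and> comult src tgt x = tens_sum ps \<and>
                    r = (\<Sum>(u,v)\<leftarrow>ps. f u * g v)) else 0)"

definition lact :: "('e \<Rightarrow> 'v) \<Rightarrow> ('e \<Rightarrow> 'v) \<Rightarrow> (('v,'e) path \<Rightarrow> 'k::field) set
     \<Rightarrow> ((('v,'e) path \<Rightarrow> 'k) \<Rightarrow> 'k) \<Rightarrow> (('v,'e) path \<Rightarrow> 'k) \<Rightarrow> (('v,'e) path \<Rightarrow> 'k)" where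
  "lact src tgt C f x = (if x \<in> C then
      (SOME y. \<exists>ps. set ps \<subseteq> C \<times> C \<and> comult src tgt x = tens_sum ps \<and>
                    y = (\<lambda>p. \<Sum>(u,v)\<leftarrow>ps. f v * u p)) else (\<lambda>_. 0))"

definition free_mod :: "('e \<Rightarrow> 'v) \<Rightarrow> ('e \<Rightarrow> 'v) \<Rightarrow> (('v,'e) path \<Rightarrow> 'k::field) set \<Rightarrow> 'i set
     \<Rightarrow> ('i \<Rightarrow> ((('v,'e) path \<Rightarrow> 'k) \<Rightarrow> 'k)) set" where
  "free_mod src tgt C I = {F. (\<forall>i. F i \<in> dual C) \<and> finite {i. F i \<noteq> (\<lambda>_. 0)} \<and>
                                (\<forall>i. i \<notin> I \<longrightarrow> F i = (\<lambda>_. 0))}"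

definition embeds_in_free :: "('e \<Rightarrow> 'v) \<Rightarrow> ('e \<Rightarrow> 'v) \<Rightarrow> (('v,'e) path \<Rightarrow> 'k::field) set
     \<Rightarrow> 'm set \<Rightarrow> ('m \<Rightarrow> 'm \<Rightarrow> 'm) \<Rightarrow> (((('v,'e) path \<Rightarrow> 'k) \<Rightarrow> 'k) \<Rightarrow> 'm \<Rightarrow> 'm) \<Rightarrow> 'i set \<Rightarrow> bool" where
  "embeds_in_free src tgt C M madd mact I \<longleftrightarrow>
     (\<exists>\<phi>. inj_on \<phi> M \<and> \<phi> ` M \<subseteq> free_mod src tgt C I \<and>
         (\<forall>x\<in>M. \<forall>y\<in>M. \<phi> (madd x y) = (\<lambda>i z. \<phi> x i z + \<phi> y i z)) \<and>
         (\<forall>f\<in>dual C. \<forall>x\<in>M. \<phi> (mact f x) = (\<lambda>i. conv src tgt C f (\<phi> x i))))"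

(* Finite dimensional right C-comodules, realised on k^n (functions nat => k vanishing
   from n on).  M (x) C is realised as functions T on nat \<times> paths with T(i,-) \<in> C and
   T(i,-) = 0 for i \<ge> n, i.e. T = sum_i e_i (x) T(i,-). *)
definition kn :: "nat \<Rightarrow> (nat \<Rightarrow> 'k::field) set" where
  "kn n = {m. \<forall>i\<ge>n. m i = 0}"

definition unitvec :: "nat \<Rightarrow> nat \<Rightarrow> 'k::field" where
  "unitvec i = (\<lambda>j. if j = i then 1 else 0)"

definition right_comodule :: "('e \<Rightarrow> 'v) \<Rightarrow> ('e \<Rightarrow> 'v) \<Rightarrow> (('v,'e) path \<Rightarrow> 'k::field) set \<Rightarrow> nat
     \<Rightarrow> ((nat \<Rightarrow> 'k) \<Rightarrow> (nat \<times> ('v,'e) path \<Rightarrow> 'k)) \<Rightarrow> bool" where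
  "right_comodule src tgt C n \<rho> \<longleftrightarrow>
     (\<forall>m\<in>kn n. (\<forall>i. (\<lambda>p. \<rho> m (i,p)) \<in> C) \<and> (\<forall>i\<ge>n. \<forall>p. \<rho> m (i,p) = 0)) \<and>
     (\<forall>m\<in>kn n. \<forall>m'\<in>kn n. \<rho> (\<lambda>j. m j + m' j) = (\<lambda>z. \<rho> m z + \<rho> m' z)) \<and>
     (\<forall>c. \<forall>m\<in>kn n. \<rho> (\<lambda>j. c * m j) = (\<lambda>z. c * \<rho> m z)) \<and>
     \<comment> \<open>coassociativity: (rho (x) id) rho = (id (x) Delta) rho\<close>
     (\<forall>m\<in>kn n. \<forall>l x y. (\<Sum>i<n. \<rho> (unitvec i) (l,x) * \<rho> m (i,y)) =
                         comult src tgt (\<lambda>p. \<rho> m (l,p)) (x,y)) \<and>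
     \<comment> \<open>counit: (id (x) epsilon) rho = id\<close>
     (\<forall>m\<in>kn n. \<forall>l. counit (\<lambda>p. \<rho> m (l,p)) = m l)"

definition comod_act :: "((nat \<Rightarrow> 'k::field) \<Rightarrow> (nat \<times> ('v,'e) path \<Rightarrow> 'k))
     \<Rightarrow> ((('v,'e) path \<Rightarrow> 'k) \<Rightarrow> 'k) \<Rightarrow> (nat \<Rightarrow> 'k) \<Rightarrow> (nat \<Rightarrow> 'k)" where
  "comod_act \<rho> f m = (\<lambda>l. f (\<lambda>p. \<rho> m (l,p)))"

(* left qcF: C embeds as left C^*-module in a free left C^*-module.  The index set is
   taken inside the type (path \<times> nat); this loses nothing. *)
definition left_qcF :: "('e \<Rightarrow> 'v) \<Rightarrow> ('e \<Rightarrow> 'v) \<Rightarrow> (('v,'e) path \<Rightarrow> 'k::field) set \<Rightarrow> bool" where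
  "left_qcF src tgt C \<longleftrightarrow>
     (\<exists>I :: (('v,'e) path \<times> nat) set.
        embeds_in_free src tgt C C (\<lambda>x y p. x p + y p) (lact src tgt C) I)"

definition left_fqcF :: "('e \<Rightarrow> 'v) \<Rightarrow> ('e \<Rightarrow> 'v) \<Rightarrow> (('v,'e) path \<Rightarrow> 'k::field) set \<Rightarrow> bool" where
  "left_fqcF src tgt C \<longleftrightarrow>
     (\<forall>n \<rho>. right_comodule src tgt C n \<rho> \<longrightarrow>
        (\<exists>I :: nat set. embeds_in_free src tgt C (kn n) (\<lambda>m m' j. m j + m' j) (comod_act \<rho>) I))"

end

theory Submission
  imports Defs "HOL-Library.Sublist"
begin

(*
  Let B be the basis of paths of C; it is closed under left and right factors. A finite set N of
  basis paths closed under left factors spans a finite dimensional right subcomodule kN of C.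
  Suppose all paths of N start at w and N contains the trivial path e_w. An embedding phi of kN
  into a free C*-module gives a component G of phi(e_w) and a basis path y with G(y) \<noteq> 0. For
  the coordinate functionals p* we have p* -> e_p = e_w for p in N, and t* -> e_w = 0 for every
  nontrivial path t. Applying phi, the first identity forces every p in N to be a prefix of y,
  and the second one forbids any nontrivial t with t y in B, since (t* G)(t y) = G(y).

  Applied to finite sets of paths from one vertex, this makes the paths of B starting at a vertex
  a chain for the prefix order; in particular all nonempty ones share their first arrow a. If
  such a path a r were longer than a left maximal path y from the target of a, then y would be a
  prefix of r, so a y would lie in B, contradicting maximality. So only finitely many paths of B
  start at each vertex v, C is the direct sum of the finite dimensional comodules spanned by
  them, each summand embeds in a free module by f-qcF, and together these embeddings embed C.
*)

section \<open>Paths and their factorisations\<close>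

lemma valid_path_Nil [simp]: "valid_path src tgt (v, [])"
  by (simp add: valid_path_def)

lemma valid_path_Cons [simp]:
  "valid_path src tgt (v, a # as) \<longleftrightarrow> src a = v \<and> valid_path src tgt (tgt a, as)"
  unfolding valid_path_def by (cases as) (auto simp: All_less_Suc2)

lemma path_end_Nil [simp]: "path_end tgt (v, []) = v"
  by (simp add: path_end_def)

lemma path_end_Cons [simp]: "path_end tgt (v, a # as) = path_end tgt (tgt a, as)"
  by (cases as) (simp_all add: path_end_def)

lemma valid_path_append:
  "valid_path src tgt (v, xs @ ys) \<longleftrightarrow>
     valid_path src tgt (v, xs) \<and> valid_path src tgt (path_end tgt (v, xs), ys)"
  by (induction xs arbitrary: v) auto

lemma path_end_append [simp]:
  "path_end tgt (v, xs @ ys) = path_end tgt (path_end tgt (v, xs), ys)"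
  by (induction xs arbitrary: v) auto

lemma fst_path_cat [simp]: "fst (path_cat a b) = fst a"
  and snd_path_cat [simp]: "snd (path_cat a b) = snd a @ snd b"
  by (simp_all add: path_cat_def)

lemma path_cat_assoc: "path_cat (path_cat a b) c = path_cat a (path_cat b c)"
  by (simp add: path_cat_def)

definition composable :: "('e \<Rightarrow> 'v) \<Rightarrow> ('e \<Rightarrow> 'v) \<Rightarrow> ('v,'e) path \<Rightarrow> ('v,'e) path \<Rightarrow> bool" where
  "composable src tgt a b \<longleftrightarrow>
     valid_path src tgt a \<and> valid_path src tgt b \<and> path_end tgt a = fst b"

lemma comult_apply:
  "comult src tgt x (a, b) = (if composable src tgt a b then x (path_cat a b) else 0)"
  by (simp add: comult_def composable_def)

lemma composable_assoc:
  "composable src tgt a x \<and> composable src tgt (path_cat a x) y \<longleftrightarrow>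
   composable src tgt x y \<and> composable src tgt a (path_cat x y)"
  unfolding composable_def path_cat_def
  by (cases a, cases x, cases y) (auto simp: valid_path_append)

lemma composable_right_unique:
  "composable src tgt a b \<Longrightarrow> composable src tgt a b' \<Longrightarrow> path_cat a b = path_cat a b' \<Longrightarrow> b = b'"
  unfolding composable_def path_cat_def by (cases b, cases b') auto

lemma composable_trivial_left:
  "composable src tgt (fst p, []) p \<longleftrightarrow> valid_path src tgt p"
  unfolding composable_def by simp

lemma path_cat_trivial_left: "path_cat (fst p, []) p = p"
  by (simp add: path_cat_def)

lemma path_cat_eq_self_left: "path_cat a p = p \<Longrightarrow> a = (fst p, [])"
  unfolding path_cat_def by (cases a, cases p) auto

lemma composable_trivial_right:
  "composable src tgt a (v, []) \<longleftrightarrow> valid_path src tgt a \<and> v = path_end tgt a"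
  unfolding composable_def by auto

lemma path_cat_trivial_right [simp]: "path_cat a (v, []) = a"
  by (simp add: path_cat_def)

lemma prefix_path_factor:
  assumes "valid_path src tgt p" "prefix xs (snd p)"
  obtains b where "composable src tgt (fst p, xs) b" "path_cat (fst p, xs) b = p"
proof -
  obtain ys where ys: "snd p = xs @ ys" using assms(2) by (auto elim: prefixE)
  let ?b = "(path_end tgt (fst p, xs), ys)"
  have "composable src tgt (fst p, xs) ?b"
    using assms(1) ys by (cases p) (simp add: composable_def valid_path_append)
  moreover have "path_cat (fst p, xs) ?b = p"
    using ys by (simp add: path_cat_def prod_eq_iff)
  ultimately show ?thesis by (rule that)
qed

lemma finite_factorisations: "finite {(a, b). composable src tgt a b \<and> path_cat a b = q}"
proof (rule finite_subset)
  let ?split = "\<lambda>k. ((fst q, take k (snd q)), (path_end tgt (fst q, take k (snd q)), drop k (snd q)))"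
  show "{(a, b). composable src tgt a b \<and> path_cat a b = q} \<subseteq> ?split ` {..length (snd q)}"
  proof
    fix z assume "z \<in> {(a, b). composable src tgt a b \<and> path_cat a b = q}"
    then obtain a b where "z = (a, b)" "composable src tgt a b" "q = path_cat a b" by blast
    then show "z \<in> ?split ` {..length (snd q)}"
      by (intro image_eqI[of _ _ "length (snd a)"]) (auto simp: composable_def prod_eq_iff)
  qed
qed simp

lemma sum_list_nonzero: "(\<Sum>z\<leftarrow>zs. h z) \<noteq> (0::'a::comm_monoid_add) \<Longrightarrow> \<exists>z\<in>set zs. h z \<noteq> 0"
  by (induction zs) auto

lemma prefix_same_length: "prefix xs ys \<Longrightarrow> length ys \<le> length xs \<Longrightarrow> xs = ys"
  by (auto simp: prefix_def)

section \<open>Monomial subcoalgebras and their dual algebra\<close>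

locale monomial_coalg =
  fixes src tgt :: "'e \<Rightarrow> 'v" and B :: "('v,'e) path set"
    and C :: "(('v,'e) path \<Rightarrow> 'k::field) set"
  assumes basis_valid: "\<And>p. p \<in> B \<Longrightarrow> valid_path src tgt p"
    and C_eq: "C = {x \<in> path_coalg src tgt. \<forall>p. x p \<noteq> 0 \<longrightarrow> p \<in> B}"
    and subcoalg: "subcoalgebra src tgt C"
    and trivial_path_in_C: "\<And>v. path_vec (v, []) \<in> C"
begin

lemma mem_C: "x \<in> C \<longleftrightarrow> finite {p. x p \<noteq> 0} \<and> (\<forall>p. x p \<noteq> 0 \<longrightarrow> p \<in> B)"
  using basis_valid unfolding C_eq path_coalg_def by auto

lemma zero_in_C [simp]: "(\<lambda>_. 0) \<in> C"
  by (simp add: mem_C)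

lemma add_in_C:
  assumes "x \<in> C" "y \<in> C"
  shows "(\<lambda>p. x p + y p) \<in> C"
proof -
  note assms
  moreover have "{p. x p + y p \<noteq> 0} \<subseteq> {p. x p \<noteq> 0} \<union> {p. y p \<noteq> 0}" by auto
  ultimately show ?thesis
    unfolding mem_C by (metis (mono_tags, lifting) add.right_neutral add_0 finite_Un finite_subset)
qed

lemma smult_in_C:
  assumes "x \<in> C"
  shows "(\<lambda>p. c * x p) \<in> C"
proof -
  note assms
  moreover have "{p. c * x p \<noteq> 0} \<subseteq> {p. x p \<noteq> 0}" by auto
  ultimately show ?thesis
    unfolding mem_C by (metis (mono_tags, lifting) finite_subset mult_zero_right)
qed

lemma path_vec_in_C:
  assumes "p \<in> B"
  shows "path_vec p \<in> C"
proof -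
  note assms
  moreover have "{q. path_vec p q \<noteq> (0::'k)} = {p}" by (auto simp: path_vec_def)
  ultimately show ?thesis
    unfolding mem_C by (auto simp: path_vec_def split: if_splits)
qed

lemma trivial_path_in_basis: "(v, []) \<in> B"
  using trivial_path_in_C[of v] unfolding mem_C path_vec_def by (metis one_neq_zero)

lemma exists_tens_rep: "x \<in> C \<Longrightarrow> \<exists>ps. set ps \<subseteq> C \<times> C \<and> comult src tgt x = tens_sum ps"
  using subcoalg unfolding subcoalgebra_def by blast

lemma basis_factors:
  assumes "composable src tgt a b" "path_cat a b \<in> B"
  shows "a \<in> B" "b \<in> B"
proof -
  obtain ps where ps: "set ps \<subseteq> C \<times> C" "comult src tgt (path_vec (path_cat a b)) = tens_sum ps"
    using exists_tens_rep path_vec_in_C assms(2) by blast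
  have "tens_sum ps (a, b) = (1::'k)"
    using assms(1) ps(2)[symmetric] by (simp add: comult_apply path_vec_def)
  then obtain u v where "(u, v) \<in> set ps" "u a * v b \<noteq> 0"
    using sum_list_nonzero[of "\<lambda>(u, v). tens u v (a, b)" ps]
    by (auto simp: tens_sum_def tens_def)
  moreover from this ps(1) have "u \<in> C" "v \<in> C" by auto
  ultimately show "a \<in> B" "b \<in> B"
    unfolding mem_C by (metis mult_zero_left, metis mult_zero_right)
qed

lemma basis_prefix:
  assumes "p \<in> B" "prefix xs (snd p)"
  shows "(fst p, xs) \<in> B"
proof -
  obtain b where b: "composable src tgt (fst p, xs) b" "path_cat (fst p, xs) b = p"
    using prefix_path_factor[OF basis_valid] assms by blast
  show ?thesis
    using basis_factors(1)[OF b(1)] b(2) assms(1) by simp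
qed

definition left_maximal :: "('v,'e) path \<Rightarrow> bool" where
  "left_maximal y \<longleftrightarrow> (\<forall>t. composable src tgt t y \<and> path_cat t y \<in> B \<longrightarrow> snd t = [])"

lemma dual_add: "f \<in> dual C \<Longrightarrow> x \<in> C \<Longrightarrow> y \<in> C \<Longrightarrow> f (\<lambda>p. x p + y p) = f x + f y"
  and dual_smult: "f \<in> dual C \<Longrightarrow> x \<in> C \<Longrightarrow> f (\<lambda>p. c * x p) = c * f x"
  unfolding dual_def by blast+

lemma dual_zero: "f \<in> dual C \<Longrightarrow> f (\<lambda>_. 0) = 0"
  using dual_smult[of f "\<lambda>_. 0" 0] by simp

lemma sum_list_in_C:
  "\<forall>z\<in>set zs. h z \<in> C \<Longrightarrow> (\<lambda>q. \<Sum>z\<leftarrow>zs. c z * h z q) \<in> C"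
proof (induction zs)
  case (Cons z zs)
  then have "(\<lambda>q. c z * h z q) \<in> C" "(\<lambda>q. \<Sum>z\<leftarrow>zs. c z * h z q) \<in> C"
    by (simp_all add: smult_in_C)
  then show ?case
    using add_in_C by simp
qed simp

lemma dual_sum_list:
  assumes "f \<in> dual C" "\<forall>z\<in>set zs. h z \<in> C"
  shows "f (\<lambda>q. \<Sum>z\<leftarrow>zs. c z * h z q) = (\<Sum>z\<leftarrow>zs. c z * f (h z))"
  using assms(2)
proof (induction zs)
  case Nil
  show ?case using dual_zero[OF assms(1)] by simp
next
  case (Cons z zs)
  let ?s = "\<lambda>q. \<Sum>z\<leftarrow>zs. c z * h z q"
  have hz: "h z \<in> C" and s: "?s \<in> C" "f ?s = (\<Sum>z\<leftarrow>zs. c z * f (h z))"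
    using Cons sum_list_in_C by auto
  have t: "(\<lambda>q. c z * h z q) \<in> C"
    using hz by (rule smult_in_C)
  have eq: "(\<lambda>q. \<Sum>z\<leftarrow>z # zs. c z * h z q) = (\<lambda>q. c z * h z q + ?s q)"
    by simp
  show ?case
    unfolding eq dual_add[OF assms(1) t s(1)] dual_smult[OF assms(1) hz] s(2) by simp
qed

lemma dual_expand:
  assumes "f \<in> dual C" "u \<in> C"
  shows "f u = (\<Sum>a | u a \<noteq> 0. u a * f (path_vec a))"
proof -
  have "finite {a. u a \<noteq> 0}"
    using assms(2) mem_C by blast
  then obtain xs where xs: "set xs = {a. u a \<noteq> 0}" "distinct xs"
    using finite_distinct_list by blast
  have u_eq: "(\<lambda>q. \<Sum>a\<leftarrow>xs. u a * path_vec a q) = u"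
  proof
    fix q
    have "(\<Sum>a\<leftarrow>xs. u a * path_vec a q) = (\<Sum>a\<in>set xs. if q = a then u a else 0)"
      unfolding sum_list_distinct_conv_sum_set[OF xs(2)] path_vec_def by (intro sum.cong) auto
    also have "\<dots> = u q"
      by (simp add: sum.delta') (use xs(1) in auto)
    finally show "(\<Sum>a\<leftarrow>xs. u a * path_vec a q) = u q" .
  qed
  have "\<forall>a\<in>set xs. path_vec a \<in> C"
    using assms(2) xs(1) path_vec_in_C by (auto simp: mem_C[of u])
  then have "f u = (\<Sum>a\<leftarrow>xs. u a * f (path_vec a))"
    using dual_sum_list[OF assms(1), of xs path_vec u] by (simp only: u_eq)
  then show ?thesis
    by (simp add: sum_list_distinct_conv_sum_set[OF xs(2)] xs(1))
qed

lemma dual_nonzero_witness: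
  assumes "f \<in> dual C" "u \<in> C" "f u \<noteq> 0"
  obtains a where "u a \<noteq> 0" "f (path_vec a) \<noteq> 0"
proof -
  have "(\<Sum>a | u a \<noteq> 0. u a * f (path_vec a)) \<noteq> 0"
    using dual_expand[OF assms(1,2)] assms(3) by simp
  then obtain a where "u a * f (path_vec a) \<noteq> 0"
    using sum.not_neutral_contains_not_neutral by blast
  then have "u a \<noteq> 0" "f (path_vec a) \<noteq> 0"
    by auto
  then show thesis
    by (rule that)
qed

lemma dual_nonzero_basis:
  assumes "f \<in> dual C" "f \<noteq> (\<lambda>_. 0)"
  obtains p where "p \<in> B" "f (path_vec p) \<noteq> 0"
proof -
  obtain x where x: "f x \<noteq> 0"
    using assms(2) by blast
  then have "x \<in> C"
    using assms(1) unfolding dual_def by blast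
  then obtain p where "x p \<noteq> 0" "f (path_vec p) \<noteq> 0"
    using dual_nonzero_witness[OF assms(1) _ x] by blast
  moreover from this \<open>x \<in> C\<close> have "p \<in> B"
    unfolding mem_C by blast
  ultimately show thesis
    using that by blast
qed

lemma zero_in_dual: "(\<lambda>_. 0) \<in> dual C"
  by (simp add: dual_def)

lemma comult_tens_rep_slice:
  "comult src tgt x = tens_sum ps \<Longrightarrow>
     (\<lambda>b. comult src tgt x (q, b)) = (\<lambda>b. \<Sum>z\<leftarrow>ps. fst z q * snd z b)"
  by (simp add: tens_sum_def tens_def split_def)

lemma comult_slice_in_C:
  assumes "x \<in> C"
  shows "(\<lambda>b. comult src tgt x (q, b)) \<in> C"
proof -
  obtain ps where ps: "set ps \<subseteq> C \<times> C" "comult src tgt x = tens_sum ps"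
    using exists_tens_rep[OF assms] by blast
  then have "\<forall>z\<in>set ps. snd z \<in> C"
    by auto
  then show ?thesis
    unfolding comult_tens_rep_slice[OF ps(2)] by (rule sum_list_in_C)
qed

text \<open>\<open>lact\<close> picks an arbitrary representation of \<open>\<Delta>(x)\<close> as a sum of tensors; every
  representation yields the same value.\<close>
lemma lact_tens_rep:
  assumes "set ps \<subseteq> C \<times> C" "comult src tgt x = tens_sum ps" "f \<in> dual C"
  shows "(\<lambda>q. \<Sum>(u, v)\<leftarrow>ps. f v * u q) = (\<lambda>q. f (\<lambda>b. comult src tgt x (q, b)))"
proof
  fix q
  have "f (\<lambda>b. comult src tgt x (q, b)) = (\<Sum>z\<leftarrow>ps. fst z q * f (snd z))"
    unfolding comult_tens_rep_slice[OF assms(2)] using assms(1)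
    by (intro dual_sum_list[OF assms(3)]) auto
  then show "(\<Sum>(u, v)\<leftarrow>ps. f v * u q) = f (\<lambda>b. comult src tgt x (q, b))"
    by (simp add: split_def mult.commute)
qed

lemma lact_eq:
  assumes "x \<in> C" "f \<in> dual C"
  shows "lact src tgt C f x = (\<lambda>q. f (\<lambda>b. comult src tgt x (q, b)))"
proof -
  let ?P = "\<lambda>y. \<exists>ps. set ps \<subseteq> C \<times> C \<and> comult src tgt x = tens_sum ps \<and>
                   y = (\<lambda>p. \<Sum>(u, v)\<leftarrow>ps. f v * u p)"
  obtain ps where ps: "set ps \<subseteq> C \<times> C" "comult src tgt x = tens_sum ps"
    using exists_tens_rep[OF assms(1)] by blast
  then have "?P (\<lambda>p. \<Sum>(u, v)\<leftarrow>ps. f v * u p)"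
    by blast
  then have "?P (SOME y. ?P y)"
    by (rule someI[of ?P])
  then show ?thesis
    unfolding lact_def using assms lact_tens_rep by auto
qed

lemma lact_in_C:
  assumes "x \<in> C" "f \<in> dual C"
  shows "lact src tgt C f x \<in> C"
proof -
  obtain ps where ps: "set ps \<subseteq> C \<times> C" "comult src tgt x = tens_sum ps"
    using exists_tens_rep[OF assms(1)] by blast
  have "(\<lambda>q. \<Sum>z\<leftarrow>ps. f (snd z) * fst z q) \<in> C"
    using ps(1) by (intro sum_list_in_C) auto
  then show ?thesis
    using lact_tens_rep[OF ps assms(2)] lact_eq[OF assms] by (simp add: split_def)
qed

lemma conv_eq:
  assumes "x \<in> C" "f \<in> dual C" "g \<in> dual C"
  shows "conv src tgt C f g x = f (lact src tgt C g x)"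
proof -
  have rep: "(\<Sum>(u, v)\<leftarrow>ps. f u * g v) = f (lact src tgt C g x)"
    if ps: "set ps \<subseteq> C \<times> C" "comult src tgt x = tens_sum ps" for ps
  proof -
    have "f (lact src tgt C g x) = f (\<lambda>q. \<Sum>z\<leftarrow>ps. g (snd z) * fst z q)"
      using lact_tens_rep[OF ps assms(3)] lact_eq[OF assms(1,3)] by (simp add: split_def)
    also have "\<dots> = (\<Sum>z\<leftarrow>ps. g (snd z) * f (fst z))"
      using ps(1) by (intro dual_sum_list[OF assms(2)]) auto
    finally show ?thesis
      by (simp add: split_def mult.commute)
  qed
  let ?P = "\<lambda>r. \<exists>ps. set ps \<subseteq> C \<times> C \<and> comult src tgt x = tens_sum ps \<and>
                   r = (\<Sum>(u, v)\<leftarrow>ps. f u * g v)"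
  obtain ps where ps: "set ps \<subseteq> C \<times> C" "comult src tgt x = tens_sum ps"
    using exists_tens_rep[OF assms(1)] by blast
  then have "?P (\<Sum>(u, v)\<leftarrow>ps. f u * g v)"
    by blast
  then have "?P (SOME r. ?P r)"
    by (rule someI[of ?P])
  then show ?thesis
    unfolding conv_def using assms(1) rep by auto
qed

definition coord :: "('v,'e) path \<Rightarrow> (('v,'e) path \<Rightarrow> 'k) \<Rightarrow> 'k" where
  "coord q = (\<lambda>y. if y \<in> C then y q else 0)"

lemma coord_in_dual: "coord q \<in> dual C"
  unfolding dual_def coord_def using add_in_C smult_in_C by auto

lemma coord_path_vec: "a \<in> B \<Longrightarrow> coord q (path_vec a) = (if a = q then 1 else 0)"
  using path_vec_in_C by (auto simp: coord_def path_vec_def)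

lemma conv_zero_right:
  assumes "f \<in> dual C"
  shows "conv src tgt C f (\<lambda>_. 0) = (\<lambda>_. 0)"
proof
  fix x
  show "conv src tgt C f (\<lambda>_. 0) x = 0"
    using conv_eq[OF _ assms zero_in_dual] lact_eq[OF _ zero_in_dual] dual_zero[OF assms]
    by (cases "x \<in> C") (simp_all add: conv_def)
qed

lemma conv_path_vec_nonzero:
  assumes "f \<in> dual C" "g \<in> dual C" "y \<in> B" "conv src tgt C f g (path_vec y) \<noteq> 0"
  obtains a b where "composable src tgt a b" "path_cat a b = y"
    "f (path_vec a) \<noteq> 0" "g (path_vec b) \<noteq> 0"
proof -
  have y: "path_vec y \<in> C"
    using assms(3) by (rule path_vec_in_C)
  have "f (lact src tgt C g (path_vec y)) \<noteq> 0"
    using assms(4) conv_eq[OF y assms(1,2)] by simp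
  then obtain a where a: "lact src tgt C g (path_vec y) a \<noteq> 0" "f (path_vec a) \<noteq> 0"
    by (rule dual_nonzero_witness[OF assms(1) lact_in_C[OF y assms(2)]])
  then have "g (\<lambda>b. comult src tgt (path_vec y) (a, b)) \<noteq> 0"
    using lact_eq[OF y assms(2)] by simp
  then obtain b where b: "comult src tgt (path_vec y) (a, b) \<noteq> (0::'k)" "g (path_vec b) \<noteq> 0"
    by (rule dual_nonzero_witness[OF assms(2) comult_slice_in_C[OF y]])
  from b(1) have "composable src tgt a b" "path_cat a b = y"
    by (auto simp: comult_apply path_vec_def split: if_splits)
  then show thesis
    using that a(2) b(2) by blast
qed

lemma conv_coord_path_cat:
  assumes "g \<in> dual C" "composable src tgt t y" "path_cat t y \<in> B"
  shows "conv src tgt C (coord t) g (path_vec (path_cat t y)) = g (path_vec y)"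
proof -
  have ty: "path_vec (path_cat t y) \<in> C"
    using assms(3) by (rule path_vec_in_C)
  have "(\<lambda>b. comult src tgt (path_vec (path_cat t y)) (t, b)) = (path_vec y :: _ \<Rightarrow> 'k)"
  proof
    fix b
    show "comult src tgt (path_vec (path_cat t y)) (t, b) = path_vec y b"
      using assms(2) composable_right_unique[OF assms(2), of b]
      by (auto simp: comult_apply path_vec_def)
  qed
  then show ?thesis
    using conv_eq[OF ty coord_in_dual assms(1)] lact_eq[OF ty assms(1)]
      lact_in_C[OF ty assms(1)] by (simp add: coord_def)
qed

end

section \<open>The subcomodule spanned by a left closed set of paths\<close>

definition cat_index :: "('e \<Rightarrow> 'v) \<Rightarrow> ('e \<Rightarrow> 'v) \<Rightarrow> (nat \<Rightarrow> ('v,'e) path) \<Rightarrow> nat \<Rightarrow> ('v,'e) path \<Rightarrow> nat \<Rightarrow> bool" where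
  "cat_index src tgt e i p j \<longleftrightarrow> composable src tgt (e i) p \<and> path_cat (e i) p = e j"

text \<open>For \<open>N = {e 0, \<dots>, e (n-1)}\<close> closed under left factors, \<open>kN\<close> is a right subcomodule of
  \<open>C\<close> with \<open>\<rho>(e j) = \<Sum> e i \<otimes> p\<close> over all factorisations \<open>e i \<cdot> p = e j\<close>; \<open>coaction\<close> is this
  \<open>\<rho>\<close> in the coordinates of \<open>k\<^sup>n\<close>.\<close>
definition coaction :: "('e \<Rightarrow> 'v) \<Rightarrow> ('e \<Rightarrow> 'v) \<Rightarrow> (nat \<Rightarrow> ('v,'e) path) \<Rightarrow> nat
    \<Rightarrow> (nat \<Rightarrow> 'k::field) \<Rightarrow> (nat \<times> ('v,'e) path \<Rightarrow> 'k)" where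
  "coaction src tgt e n m = (\<lambda>(i, p). if i < n
      then (\<Sum>j<n. m j * (if cat_index src tgt e i p j then 1 else 0)) else 0)"

locale finite_subcomodule = monomial_coalg src tgt B C
  for src tgt :: "'e \<Rightarrow> 'v" and B and C :: "(('v,'e) path \<Rightarrow> 'k::field) set" +
  fixes N :: "('v,'e) path set" and e :: "nat \<Rightarrow> ('v,'e) path" and n :: nat
  assumes N_subset: "N \<subseteq> B"
    and e_bij: "bij_betw e {..<n} N"
    and N_left_factor: "\<And>a b. composable src tgt a b \<Longrightarrow> path_cat a b \<in> N \<Longrightarrow> a \<in> N"
begin

abbreviation "idx \<equiv> cat_index src tgt e"
abbreviation "\<rho> \<equiv> coaction src tgt e n"

lemma e_inj: "i < n \<Longrightarrow> j < n \<Longrightarrow> e i = e j \<Longrightarrow> i = j"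
  using e_bij unfolding bij_betw_def inj_on_def by auto

lemma e_in_N: "i < n \<Longrightarrow> e i \<in> N"
  using e_bij unfolding bij_betw_def by auto

lemma e_in_B: "i < n \<Longrightarrow> e i \<in> B"
  using e_in_N N_subset by auto

lemma N_enum: "p \<in> N \<Longrightarrow> \<exists>i<n. e i = p"
  using e_bij unfolding bij_betw_def by auto

lemma cat_index_unique: "j < n \<Longrightarrow> j' < n \<Longrightarrow> idx i p j \<Longrightarrow> idx i p j' \<Longrightarrow> j = j'"
  unfolding cat_index_def using e_inj by auto

lemma coaction_eq_coeff:
  assumes "i < n" "j < n" "idx i p j"
  shows "\<rho> m (i, p) = m j"
proof -
  have "(\<Sum>k<n. m k * (if idx i p k then 1 else 0)) = (\<Sum>k<n. if k = j then m k else 0)"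
    using assms cat_index_unique by (intro sum.cong) auto
  then show ?thesis
    using assms by (simp add: coaction_def)
qed

lemma coaction_eq_zero: "\<not> (\<exists>j<n. idx i p j) \<Longrightarrow> \<rho> m (i, p) = 0"
  by (simp add: coaction_def)

lemma coaction_unitvec:
  assumes "l < n" "i < n"
  shows "\<rho> (unitvec i) (l, x) = (if idx l x i then 1 else 0)"
proof (cases "\<exists>j<n. idx l x j")
  case True
  then obtain j where j: "j < n" "idx l x j" by blast
  have "\<rho> (unitvec i) (l, x) = unitvec i j"
    using assms(1) j by (rule coaction_eq_coeff)
  moreover have "idx l x i \<longleftrightarrow> i = j"
    using cat_index_unique[OF assms(2) j(1)] j(2) by blast
  ultimately show ?thesis
    unfolding unitvec_def by (cases "i = j") simp_all
next
  case False
  then show ?thesis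
    using assms coaction_eq_zero[OF False] by auto
qed

lemma coaction_slice_in_C: "(\<lambda>p. \<rho> m (i, p)) \<in> C"
proof -
  let ?F = "\<Union>j<n. snd ` {(a, b). composable src tgt a b \<and> path_cat a b = e j}"
  have support: "\<exists>j<n. idx i p j" if "\<rho> m (i, p) \<noteq> 0" for p
    using that coaction_eq_zero by blast
  have "{p. \<rho> m (i, p) \<noteq> 0} \<subseteq> ?F"
  proof
    fix p assume "p \<in> {p. \<rho> m (i, p) \<noteq> 0}"
    then obtain j where "j < n" "idx i p j"
      using support by blast
    then show "p \<in> ?F"
      unfolding cat_index_def by (auto intro!: image_eqI[of p snd "(e i, p)"])
  qed
  moreover have "finite ?F"
  proof (rule finite_UN_I)
    fix j
    show "finite (snd ` {(a, b). composable src tgt a b \<and> path_cat a b = e j})"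
      using finite_factorisations by (rule finite_imageI)
  qed simp
  moreover have "p \<in> B" if nz: "\<rho> m (i, p) \<noteq> 0" for p
  proof -
    obtain j where "j < n" "idx i p j"
      using support[OF nz] by blast
    then have "composable src tgt (e i) p" "path_cat (e i) p \<in> B"
      by (simp_all add: cat_index_def e_in_B)
    then show "p \<in> B"
      by (rule basis_factors(2))
  qed
  ultimately show ?thesis
    unfolding mem_C using finite_subset by blast
qed

lemma cat_index_cat:
  assumes "idx l x i"
  shows "idx i y j \<longleftrightarrow> composable src tgt x y \<and> idx l (path_cat x y) j"
  using assms composable_assoc[of src tgt "e l" x y]
  unfolding cat_index_def by (auto simp: path_cat_assoc[symmetric])

lemma cat_index_left_factor:
  assumes "j < n" "idx l (path_cat x y) j" "composable src tgt x y"
  shows "\<exists>i<n. idx l x i"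
proof -
  have "composable src tgt (e l) x" "composable src tgt (path_cat (e l) x) y"
    "path_cat (path_cat (e l) x) y = e j"
    using assms(2,3) composable_assoc[of src tgt "e l" x y]
    unfolding cat_index_def by (auto simp: path_cat_assoc)
  moreover from this have "path_cat (e l) x \<in> N"
    using N_left_factor e_in_N[OF assms(1)] by metis
  ultimately show ?thesis
    using N_enum unfolding cat_index_def by metis
qed

lemma coaction_counit:
  assumes "m \<in> kn n"
  shows "counit (\<lambda>p. \<rho> m (l, p)) = m l"
proof (cases "l < n")
  case False
  then show ?thesis
    using assms by (simp add: counit_def coaction_def kn_def)
next
  case l: True
  have trivial: "\<rho> m (l, (v, [])) = (if v = path_end tgt (e l) then m l else 0)" for v
  proof (cases "v = path_end tgt (e l)")
    case True
    then have "idx l (v, []) l"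
      using basis_valid e_in_B[OF l] by (simp add: cat_index_def composable_trivial_right)
    then show ?thesis
      using coaction_eq_coeff[OF l l] True by simp
  next
    case False
    then have "\<not> (\<exists>j<n. idx l (v, []) j)"
      by (simp add: cat_index_def composable_trivial_right)
    then show ?thesis
      using False by (simp add: coaction_eq_zero)
  qed
  show ?thesis
  proof (cases "m l = 0")
    case False
    then have "{v. (if v = path_end tgt (e l) then m l else 0) \<noteq> 0} = {path_end tgt (e l)}"
      by auto
    then show ?thesis
      unfolding counit_def trivial by simp
  qed (simp add: counit_def trivial)
qed

lemma coaction_coassoc:
  "(\<Sum>i<n. \<rho> (unitvec i) (l, x) * \<rho> m (i, y)) = comult src tgt (\<lambda>p. \<rho> m (l, p)) (x, y)"
proof (cases "l < n \<and> (\<exists>i<n. idx l x i)")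
  case True
  then obtain i0 where i0: "l < n" "i0 < n" "idx l x i0"
    by blast
  have unit: "\<rho> (unitvec i) (l, x) = (if i = i0 then 1 else 0)" if i: "i < n" for i
  proof -
    have "idx l x i \<longleftrightarrow> i = i0"
      using cat_index_unique[OF i i0(2) _ i0(3)] i0(3) by blast
    then show ?thesis
      unfolding coaction_unitvec[OF i0(1) i] by simp
  qed
  have "(\<Sum>i<n. \<rho> (unitvec i) (l, x) * \<rho> m (i, y)) = (\<Sum>i<n. if i = i0 then \<rho> m (i, y) else 0)"
    by (intro sum.cong refl) (simp add: unit)
  also have "\<dots> = \<rho> m (i0, y)"
    using i0(2) by simp
  also have "\<dots> = (if composable src tgt x y then \<rho> m (l, path_cat x y) else 0)"
    using i0 by (cases "composable src tgt x y") (simp_all add: coaction_def cat_index_cat[OF i0(3)])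
  finally show ?thesis
    by (simp add: comult_apply)
next
  case False
  have "\<rho> (unitvec i) (l, x) = 0" if "i < n" for i
    using False coaction_unitvec[OF _ that, of l x] by (auto simp: coaction_def)
  then have lhs: "(\<Sum>i<n. \<rho> (unitvec i) (l, x) * \<rho> m (i, y)) = 0"
    by (intro sum.neutral) auto
  have "\<rho> m (l, path_cat x y) = 0" if xy: "composable src tgt x y"
  proof (cases "\<exists>j<n. idx l (path_cat x y) j")
    case True
    then have "\<not> l < n"
      using False cat_index_left_factor[OF _ _ xy] by blast
    then show ?thesis
      by (simp add: coaction_def)
  qed (rule coaction_eq_zero)
  then show ?thesis
    by (simp add: lhs comult_apply)
qed

lemma right_comodule: "right_comodule src tgt C n \<rho>"
  unfolding right_comodule_def
proof (intro conjI ballI allI impI)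
  fix m m' :: "nat \<Rightarrow> 'k" and c
  show "\<rho> (\<lambda>j. m j + m' j) = (\<lambda>z. \<rho> m z + \<rho> m' z)"
    by (auto simp: coaction_def sum.distrib ring_distribs)
  show "\<rho> (\<lambda>j. c * m j) = (\<lambda>z. c * \<rho> m z)"
    by (auto simp: coaction_def sum_distrib_left mult.assoc)
next
  fix m :: "nat \<Rightarrow> 'k" and i p
  show "(\<lambda>p. \<rho> m (i, p)) \<in> C"
    by (rule coaction_slice_in_C)
  assume "n \<le> i"
  then show "\<rho> m (i, p) = 0"
    by (simp add: coaction_def)
next
  fix m :: "nat \<Rightarrow> 'k" and l x y
  show "(\<Sum>i<n. \<rho> (unitvec i) (l, x) * \<rho> m (i, y)) = comult src tgt (\<lambda>p. \<rho> m (l, p)) (x, y)"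
    by (rule coaction_coassoc)
next
  fix m :: "nat \<Rightarrow> 'k" and l
  assume "m \<in> kn n"
  then show "counit (\<lambda>p. \<rho> m (l, p)) = m l"
    by (rule coaction_counit)
qed

lemma coord_act_unitvec:
  assumes "i < n"
  shows "comod_act \<rho> (coord t) (unitvec i) = (\<lambda>l. if l < n \<and> idx l t i then 1 else 0)"
proof
  fix l
  have "comod_act \<rho> (coord t) (unitvec i) l = \<rho> (unitvec i) (l, t)"
    using coaction_slice_in_C by (simp add: comod_act_def coord_def)
  also have "\<dots> = (if l < n \<and> idx l t i then 1 else 0)"
    using coaction_unitvec[OF _ assms, of l t] by (cases "l < n") (simp_all add: coaction_def)
  finally show "comod_act \<rho> (coord t) (unitvec i) l = (if l < n \<and> idx l t i then 1 else 0)" .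
qed

end

section \<open>Embeddings into free modules\<close>

definition free_embedding :: "('e \<Rightarrow> 'v) \<Rightarrow> ('e \<Rightarrow> 'v) \<Rightarrow> (('v,'e) path \<Rightarrow> 'k::field) set
    \<Rightarrow> 'm set \<Rightarrow> ('m \<Rightarrow> 'm \<Rightarrow> 'm) \<Rightarrow> (((('v,'e) path \<Rightarrow> 'k) \<Rightarrow> 'k) \<Rightarrow> 'm \<Rightarrow> 'm) \<Rightarrow> 'i set
    \<Rightarrow> ('m \<Rightarrow> 'i \<Rightarrow> (('v,'e) path \<Rightarrow> 'k) \<Rightarrow> 'k) \<Rightarrow> bool" where
  "free_embedding src tgt C M madd mact I \<phi> \<longleftrightarrow>
     inj_on \<phi> M \<and> \<phi> ` M \<subseteq> free_mod src tgt C I \<and>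
     (\<forall>x\<in>M. \<forall>y\<in>M. \<phi> (madd x y) = (\<lambda>i z. \<phi> x i z + \<phi> y i z)) \<and>
     (\<forall>f\<in>dual C. \<forall>x\<in>M. \<phi> (mact f x) = (\<lambda>i. conv src tgt C f (\<phi> x i)))"

lemma embeds_in_free_iff:
  "embeds_in_free src tgt C M madd mact I \<longleftrightarrow> (\<exists>\<phi>. free_embedding src tgt C M madd mact I \<phi>)"
  unfolding embeds_in_free_def free_embedding_def ..

lemma free_embedding_in_dual:
  "free_embedding src tgt C M madd mact I \<phi> \<Longrightarrow> x \<in> M \<Longrightarrow> \<phi> x i \<in> dual C"
  unfolding free_embedding_def free_mod_def by blast

lemma free_embedding_finite_support:
  "free_embedding src tgt C M madd mact I \<phi> \<Longrightarrow> x \<in> M \<Longrightarrow> finite {i. \<phi> x i \<noteq> (\<lambda>_. 0)}"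
  unfolding free_embedding_def free_mod_def by blast

lemma free_embedding_act:
  "free_embedding src tgt C M madd mact I \<phi> \<Longrightarrow> f \<in> dual C \<Longrightarrow> x \<in> M \<Longrightarrow>
     \<phi> (mact f x) = (\<lambda>i. conv src tgt C f (\<phi> x i))"
  unfolding free_embedding_def by blast

lemma unitvec_in_kn: "i < n \<Longrightarrow> unitvec i \<in> kn n"
  by (simp add: kn_def unitvec_def)

lemma zero_in_kn: "(\<lambda>_. 0) \<in> kn n"
  by (simp add: kn_def)

lemma free_embedding_zero:
  assumes "free_embedding src tgt C (kn n) (\<lambda>m m' j. m j + m' j) mact I \<phi>"
  shows "\<phi> (\<lambda>_. 0) = (\<lambda>_ _. 0)"
proof -
  have add: "\<phi> (\<lambda>j. x j + y j) = (\<lambda>i z. \<phi> x i z + \<phi> y i z)" if "x \<in> kn n" "y \<in> kn n" for x y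
    using assms that unfolding free_embedding_def by blast
  from add[OF zero_in_kn zero_in_kn] have "\<phi> (\<lambda>_. 0) = (\<lambda>i z. \<phi> (\<lambda>_. 0) i z + \<phi> (\<lambda>_. 0) i z)"
    by simp
  then have "\<phi> (\<lambda>_. 0) i z = \<phi> (\<lambda>_. 0) i z + \<phi> (\<lambda>_. 0) i z" for i z
    by (rule fun_cong[OF fun_cong])
  then have "\<phi> (\<lambda>_. 0) i z = 0" for i z
    by (rule add_cancel_right_right[THEN iffD1])
  then show ?thesis
    by (intro ext)
qed

locale rooted_subcomodule = finite_subcomodule +
  fixes w and w0 :: nat
  assumes root_index: "w0 < n"
    and root: "e w0 = (w, [])"
    and N_from_root: "\<And>p. p \<in> N \<Longrightarrow> fst p = w"
begin

lemma coord_act_root: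
  assumes "i < n"
  shows "comod_act \<rho> (coord (e i)) (unitvec i) = unitvec w0"
proof -
  have "l < n \<and> idx l (e i) i \<longleftrightarrow> l = w0" for l
  proof
    assume "l < n \<and> idx l (e i) i"
    then have "e l = (fst (e i), [])"
      by (auto simp: cat_index_def intro: path_cat_eq_self_left)
    then show "l = w0"
      using N_from_root[OF e_in_N[OF assms]] root e_inj \<open>l < n \<and> _\<close> root_index by auto
  next
    assume "l = w0"
    moreover have "fst (e i) = w"
      using N_from_root e_in_N[OF assms] .
    ultimately show "l < n \<and> idx l (e i) i"
      using root root_index basis_valid[OF e_in_B[OF assms]]
      by (auto simp: cat_index_def composable_trivial_left path_cat_trivial_left)
  qed
  then show ?thesis
    unfolding coord_act_unitvec[OF assms] by (auto simp: unitvec_def)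
qed

lemma coord_act_root_nontrivial:
  assumes "snd t \<noteq> []"
  shows "comod_act \<rho> (coord t) (unitvec w0) = (\<lambda>_. 0)"
  using assms root unfolding coord_act_unitvec[OF root_index] cat_index_def path_cat_def by auto

context
  fixes I \<phi> k y
  assumes emb: "free_embedding src tgt C (kn n) (\<lambda>m m' j. m j + m' j) (comod_act \<rho>) I \<phi>"
    and y_basis: "y \<in> B"
    and y_nonzero: "\<phi> (unitvec w0) k (path_vec y) \<noteq> 0"
begin

lemma embedding_root_prefix:
  assumes "p \<in> N"
  shows "fst p = fst y \<and> prefix (snd p) (snd y)"
proof -
  obtain i where i: "i < n" "e i = p"
    using N_enum assms by blast
  have "\<phi> (unitvec w0) k = conv src tgt C (coord p) (\<phi> (unitvec i) k)"
    using free_embedding_act[OF emb coord_in_dual unitvec_in_kn[OF i(1)]] coord_act_root[OF i(1)] i(2)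
    by metis
  then obtain a b where ab: "composable src tgt a b" "path_cat a b = y" "coord p (path_vec a) \<noteq> 0"
    using conv_path_vec_nonzero[OF coord_in_dual free_embedding_in_dual[OF emb unitvec_in_kn[OF i(1)]]
        y_basis] y_nonzero by metis
  moreover have "a \<in> B"
    using ab(1,2) y_basis basis_factors(1) by blast
  ultimately have "a = p"
    using coord_path_vec by (metis zero_neq_one)
  with ab(2) show ?thesis
    by auto
qed

lemma embedding_root_left_maximal: "left_maximal y"
  unfolding left_maximal_def
proof (intro allI impI, rule ccontr)
  fix t
  assume t: "composable src tgt t y \<and> path_cat t y \<in> B" "snd t \<noteq> []"
  have "(\<lambda>_ _. 0) = (\<lambda>k. conv src tgt C (coord t) (\<phi> (unitvec w0) k))"
    using free_embedding_act[OF emb coord_in_dual unitvec_in_kn[OF root_index]]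
      coord_act_root_nontrivial[OF t(2)] free_embedding_zero[OF emb] by metis
  then have "conv src tgt C (coord t) (\<phi> (unitvec w0) k) (path_vec (path_cat t y)) = 0"
    by metis
  then show False
    using conv_coord_path_cat[OF free_embedding_in_dual[OF emb unitvec_in_kn[OF root_index]]] t(1)
      y_nonzero by simp
qed

end

lemma common_extension:
  assumes "left_fqcF src tgt C"
  shows "\<exists>y\<in>B. fst y = w \<and> (\<forall>p\<in>N. prefix (snd p) (snd y)) \<and> left_maximal y"
proof -
  obtain I :: "nat set" where "embeds_in_free src tgt C (kn n) (\<lambda>m m' j. m j + m' j) (comod_act \<rho>) I"
    using assms[unfolded left_fqcF_def, rule_format, OF right_comodule] by blast
  then obtain \<phi> where emb: "free_embedding src tgt C (kn n) (\<lambda>m m' j. m j + m' j) (comod_act \<rho>) I \<phi>"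
    unfolding embeds_in_free_iff by blast
  have "\<phi> (unitvec w0) \<noteq> \<phi> (\<lambda>_. 0)"
  proof
    assume eq: "\<phi> (unitvec w0) = \<phi> (\<lambda>_. 0)"
    have "inj_on \<phi> (kn n)"
      using emb unfolding free_embedding_def by blast
    from inj_onD[OF this eq unitvec_in_kn[OF root_index] zero_in_kn] show False
      unfolding unitvec_def by (metis one_neq_zero)
  qed
  then obtain k where "\<phi> (unitvec w0) k \<noteq> (\<lambda>_. 0)"
    using free_embedding_zero[OF emb] by auto
  then obtain y where y: "y \<in> B" "\<phi> (unitvec w0) k (path_vec y) \<noteq> 0"
    using dual_nonzero_basis free_embedding_in_dual[OF emb unitvec_in_kn[OF root_index]] by blast
  have "e w0 \<in> N"
    using e_in_N root_index .
  then have "fst y = w"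
    using embedding_root_prefix[OF emb y \<open>e w0 \<in> N\<close>] root by simp
  moreover have "\<forall>p\<in>N. prefix (snd p) (snd y)"
    using embedding_root_prefix[OF emb y] by blast
  ultimately show ?thesis
    using y(1) embedding_root_left_maximal[OF emb y] by blast
qed

end

section \<open>Finitely many basis paths start at each vertex\<close>

definition prefix_closure :: "'v \<Rightarrow> ('v,'e) path set \<Rightarrow> ('v,'e) path set" where
  "prefix_closure w P = {q. fst q = w \<and> (snd q = [] \<or> (\<exists>p\<in>P. prefix (snd q) (snd p)))}"

lemma finite_prefix_closure:
  assumes "finite P"
  shows "finite (prefix_closure w P)"
proof (rule finite_subset)
  show "prefix_closure w P \<subseteq> Pair w ` ({[]} \<union> (\<Union>p\<in>P. set (prefixes (snd p))))"
  proof
    fix q assume "q \<in> prefix_closure w P"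
    then have "q = Pair w (snd q)" "snd q \<in> {[]} \<union> (\<Union>p\<in>P. set (prefixes (snd p)))"
      by (auto simp: prefix_closure_def prod_eq_iff)
    then show "q \<in> Pair w ` ({[]} \<union> (\<Union>p\<in>P. set (prefixes (snd p))))"
      by (rule image_eqI)
  qed
qed (use assms in simp)

lemma prefix_closure_left_factor:
  assumes "path_cat a b \<in> prefix_closure w P"
  shows "a \<in> prefix_closure w P"
  using assms unfolding prefix_closure_def by (auto dest: append_prefixD)

lemma in_prefix_closure: "p \<in> P \<Longrightarrow> fst p = w \<Longrightarrow> p \<in> prefix_closure w P"
  and trivial_path_in_prefix_closure: "(w, []) \<in> prefix_closure w P"
  by (auto simp: prefix_closure_def)

context monomial_coalg
begin

lemma finite_subcomodule_exists:
  assumes "N \<subseteq> B" "finite N" "\<And>a b. composable src tgt a b \<Longrightarrow> path_cat a b \<in> N \<Longrightarrow> a \<in> N"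
  obtains e where "finite_subcomodule src tgt B C N e (card N)"
proof -
  obtain e where "bij_betw e {0..<card N} N"
    using ex_bij_betw_nat_finite assms(2) by blast
  then have "bij_betw e {..<card N} N"
    by (simp add: atLeast0LessThan)
  then show thesis
    using that assms monomial_coalg_axioms
    unfolding finite_subcomodule_def finite_subcomodule_axioms_def by blast
qed

lemma prefix_closure_subset:
  assumes "P \<subseteq> B" "\<And>p. p \<in> P \<Longrightarrow> fst p = w"
  shows "prefix_closure w P \<subseteq> B"
proof
  fix q assume "q \<in> prefix_closure w P"
  then consider "q = (w, [])" | p where "p \<in> P" "q = (fst p, snd q)" "prefix (snd q) (snd p)"
    unfolding prefix_closure_def using assms(2) by (auto simp: prod_eq_iff)
  then show "q \<in> B"
  proof cases
    case 2
    then show ?thesis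
      using basis_prefix assms(1) by (metis subsetD)
  qed (simp add: trivial_path_in_basis)
qed

lemma common_extension_exists:
  assumes "left_fqcF src tgt C" "finite P" "P \<subseteq> B" "\<And>p. p \<in> P \<Longrightarrow> fst p = w"
  shows "\<exists>y\<in>B. fst y = w \<and> (\<forall>p\<in>P. prefix (snd p) (snd y)) \<and> left_maximal y"
proof -
  let ?N = "prefix_closure w P"
  have "\<And>a b. composable src tgt a b \<Longrightarrow> path_cat a b \<in> ?N \<Longrightarrow> a \<in> ?N"
    by (rule prefix_closure_left_factor)
  then obtain e where sub: "finite_subcomodule src tgt B C ?N e (card ?N)"
    using finite_subcomodule_exists[OF prefix_closure_subset[OF assms(3,4)]
          finite_prefix_closure[OF assms(2)]] by blast
  obtain w0 where w0: "w0 < card ?N" "e w0 = (w, [])"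
    using finite_subcomodule.N_enum[OF sub trivial_path_in_prefix_closure] by blast
  interpret rooted_subcomodule src tgt B C ?N e "card ?N" w w0
    using sub w0 by (intro rooted_subcomodule.intro rooted_subcomodule_axioms.intro)
      (simp_all add: prefix_closure_def)
  obtain y where y: "y \<in> B" "fst y = w" "\<forall>p\<in>?N. prefix (snd p) (snd y)" "left_maximal y"
    using common_extension[OF assms(1)] by blast
  have "prefix (snd p) (snd y)" if p: "p \<in> P" for p
  proof -
    have "p \<in> ?N"
      using p assms(4)[OF p] by (rule in_prefix_closure)
    then show ?thesis
      using y(3) by blast
  qed
  then show ?thesis
    using y(1,2,4) by blast
qed

lemma basis_prefix_comparable:
  assumes "left_fqcF src tgt C" "p \<in> B" "q \<in> B" "fst p = fst q"
  shows "prefix (snd p) (snd q) \<or> prefix (snd q) (snd p)"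
proof -
  have "\<exists>y\<in>B. fst y = fst p \<and> (\<forall>x\<in>{p, q}. prefix (snd x) (snd y)) \<and> left_maximal y"
    using assms(2-4) by (intro common_extension_exists[OF assms(1)]) auto
  then obtain y :: "('v,'e) path" where "prefix (snd p) (snd y)" "prefix (snd q) (snd y)"
    by blast
  then show ?thesis
    by (rule prefix_same_cases)
qed

lemma continuation_shorter:
  assumes "left_fqcF src tgt C" "y \<in> B" "left_maximal y" "p \<in> B" "snd p = a # rest" "fst y = tgt a"
  shows "length rest < length (snd y)"
proof (rule ccontr)
  assume long: "\<not> length rest < length (snd y)"
  obtain v where p: "p = (v, a # rest)"
    using assms(5) by (cases p) auto
  then have "src a = v" "valid_path src tgt (tgt a, rest)"
    using basis_valid[OF assms(4)] by simp_all
  then have "composable src tgt (v, [a]) (tgt a, rest)"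
    by (simp add: composable_def)
  moreover have "path_cat (v, [a]) (tgt a, rest) \<in> B"
    using assms(4) by (simp add: p path_cat_def)
  ultimately have "(tgt a, rest) \<in> B"
    by (rule basis_factors(2))
  then have "prefix (snd y) rest \<or> prefix rest (snd y)"
    using basis_prefix_comparable[OF assms(1,2), of "(tgt a, rest)"] assms(6) by simp
  then have "prefix (snd y) rest"
    using long prefix_same_length by fastforce
  then have "path_cat (v, [a]) y \<in> B"
    using basis_prefix[OF assms(4)] p by (simp add: path_cat_def)
  moreover have "composable src tgt (v, [a]) y"
    using \<open>src a = v\<close> assms(6) basis_valid[OF assms(2)] by (simp add: composable_def)
  ultimately show False
    using assms(3) unfolding left_maximal_def by fastforce
qed

lemma basis_length_bound:
  assumes "left_fqcF src tgt C"
  obtains L where "\<And>p. p \<in> B \<Longrightarrow> fst p = w \<Longrightarrow> length (snd p) \<le> L"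
proof (cases "\<exists>p\<in>B. fst p = w \<and> snd p \<noteq> []")
  case False
  then show thesis
    using that[of 0] by auto
next
  case True
  then obtain p1 :: "('v,'e) path" and a0 r1 where p1: "p1 \<in> B" "fst p1 = w" "snd p1 = a0 # r1"
    by (metis neq_Nil_conv)
  obtain y :: "('v,'e) path" where y: "y \<in> B" "fst y = tgt a0" "left_maximal y"
    using common_extension_exists[OF assms, of "{}" "tgt a0"] by auto
  have "length (snd p) \<le> length (snd y)" if p: "p \<in> B" "fst p = w" for p
  proof (cases "snd p")
    case (Cons b rest)
    then have "b = a0"
      using basis_prefix_comparable[OF assms p1(1) p(1)] p1(2,3) p(2) by auto
    then show ?thesis
      using continuation_shorter[OF assms y(1,3) p(1)] Cons y(2) by simp
  qed simp
  then show thesis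
    by (rule that)
qed

lemma finite_basis_from:
  assumes "left_fqcF src tgt C"
  shows "finite {p \<in> B. fst p = w}"
proof -
  obtain L where L: "\<And>p. p \<in> B \<Longrightarrow> fst p = w \<Longrightarrow> length (snd p) \<le> L"
    using basis_length_bound[OF assms] by blast
  have "inj_on (\<lambda>p. length (snd p)) {p \<in> B. fst p = w}"
  proof (rule inj_onI)
    fix p q
    assume pq: "p \<in> {p \<in> B. fst p = w}" "q \<in> {p \<in> B. fst p = w}"
      and len: "length (snd p) = length (snd q)"
    then have "prefix (snd p) (snd q) \<or> prefix (snd q) (snd p)"
      using basis_prefix_comparable[OF assms, of p q] by simp
    then have "snd p = snd q"
      using len prefix_same_length[of "snd p" "snd q"] prefix_same_length[of "snd q" "snd p"] by auto
    with pq show "p = q"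
      by (simp add: prod_eq_iff)
  qed
  moreover have "(\<lambda>p. length (snd p)) ` {p \<in> B. fst p = w} \<subseteq> {..L}"
    using L by auto
  ultimately show ?thesis
    using inj_on_finite by blast
qed

end

section \<open>Gluing the embeddings of the vertex summands\<close>

definition coords :: "(nat \<Rightarrow> ('v,'e) path) \<Rightarrow> nat \<Rightarrow> (('v,'e) path \<Rightarrow> 'k) \<Rightarrow> nat \<Rightarrow> 'k::zero" where
  "coords e n x = (\<lambda>l. if l < n then x (e l) else 0)"

lemma coords_in_kn: "coords e n x \<in> kn n"
  by (simp add: coords_def kn_def)

lemma coords_add:
  fixes x y :: "('v,'e) path \<Rightarrow> 'k::monoid_add"
  shows "coords e n (\<lambda>p. x p + y p) = (\<lambda>l. coords e n x l + coords e n y l)"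
  by (auto simp: coords_def)

context finite_subcomodule
begin

lemma coaction_coords_slice:
  assumes N: "N = {p \<in> B. fst p = v}" and x: "x \<in> C" and l: "l < n"
  shows "\<rho> (coords e n x) (l, p) = comult src tgt x (e l, p)"
proof (cases "\<exists>j<n. idx l p j")
  case True
  then obtain j where j: "j < n" "idx l p j"
    by blast
  have "\<rho> (coords e n x) (l, p) = coords e n x j"
    by (rule coaction_eq_coeff[OF l j])
  with j show ?thesis
    by (simp add: coords_def cat_index_def comult_apply)
next
  case False
  have "x (path_cat (e l) p) = 0" if lp: "composable src tgt (e l) p"
  proof (rule ccontr)
    assume "x (path_cat (e l) p) \<noteq> 0"
    then have "path_cat (e l) p \<in> B"
      using x unfolding mem_C by blast
    moreover have "fst (e l) = v"
      using e_in_N[OF l] N by simp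
    ultimately have "path_cat (e l) p \<in> N"
      using N by simp
    then show False
      using N_enum False lp unfolding cat_index_def by metis
  qed
  then show ?thesis
    using coaction_eq_zero[OF False] by (simp add: comult_apply)
qed

lemma coaction_coords:
  assumes "N = {p \<in> B. fst p = v}" "x \<in> C" "f \<in> dual C"
  shows "comod_act \<rho> f (coords e n x) = coords e n (lact src tgt C f x)"
proof
  fix l
  show "comod_act \<rho> f (coords e n x) l = coords e n (lact src tgt C f x) l"
  proof (cases "l < n")
    case True
    then show ?thesis
      using coaction_coords_slice[OF assms(1,2) True] lact_eq[OF assms(2,3)]
      by (simp add: comod_act_def coords_def)
  next
    case False
    then show ?thesis
      using dual_zero[OF assms(3)] by (simp add: comod_act_def coords_def coaction_def)
  qed
qed

end

locale vertexwise_embedding = monomial_coalg src tgt B C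
  for src tgt :: "'e \<Rightarrow> 'v" and B and C :: "(('v,'e) path \<Rightarrow> 'k::field) set" +
  fixes ee :: "'v \<Rightarrow> nat \<Rightarrow> ('v,'e) path" and nn :: "'v \<Rightarrow> nat"
    and I :: "'v \<Rightarrow> nat set" and PHI :: "'v \<Rightarrow> (nat \<Rightarrow> 'k) \<Rightarrow> nat \<Rightarrow> (('v,'e) path \<Rightarrow> 'k) \<Rightarrow> 'k"
  assumes subcomodule: "\<And>v. finite_subcomodule src tgt B C {p \<in> B. fst p = v} (ee v) (nn v)"
    and embedding: "\<And>v. free_embedding src tgt C (kn (nn v)) (\<lambda>m m' j. m j + m' j)
                          (comod_act (coaction src tgt (ee v) (nn v))) (I v) (PHI v)"
begin

text \<open>\<open>C\<close> is the direct sum of the subcomodules spanned by the paths starting at a fixed vertex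
  \<open>v\<close>; the free module receiving the summand of \<open>v\<close> is indexed by the pairs \<open>((v, []), k)\<close>.\<close>
definition glue :: "(('v,'e) path \<Rightarrow> 'k) \<Rightarrow> ('v,'e) path \<times> nat \<Rightarrow> (('v,'e) path \<Rightarrow> 'k) \<Rightarrow> 'k" where
  "glue x = (\<lambda>(q, k). if snd q = [] then PHI (fst q) (coords (ee (fst q)) (nn (fst q)) x) k else (\<lambda>_. 0))"

lemma glue_trivial [simp]: "glue x ((v, []), k) = PHI v (coords (ee v) (nn v) x) k"
  and glue_nontrivial: "snd q \<noteq> [] \<Longrightarrow> glue x (q, k) = (\<lambda>_. 0)"
  by (simp_all add: glue_def)

lemma glue_inj: "inj_on glue C"
proof (rule inj_onI)
  fix x y
  assume x: "x \<in> C" and y: "y \<in> C" and eq: "glue x = glue y"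
  show "x = y"
  proof (rule ext, rule ccontr)
    fix p
    assume ne: "x p \<noteq> y p"
    then have "p \<in> B"
      using x y unfolding mem_C by metis
    then obtain l where l: "l < nn (fst p)" "ee (fst p) l = p"
      using finite_subcomodule.N_enum[OF subcomodule, of p "fst p"] by blast
    let ?v = "fst p"
    have "coords (ee ?v) (nn ?v) x l \<noteq> coords (ee ?v) (nn ?v) y l"
      using l ne by (simp add: coords_def)
    moreover have "inj_on (PHI ?v) (kn (nn ?v))"
      using embedding[of ?v] unfolding free_embedding_def by blast
    ultimately have "PHI ?v (coords (ee ?v) (nn ?v) x) \<noteq> PHI ?v (coords (ee ?v) (nn ?v) y)"
      using inj_onD[OF _ _ coords_in_kn coords_in_kn] by metis
    moreover have "PHI ?v (coords (ee ?v) (nn ?v) x) k = PHI ?v (coords (ee ?v) (nn ?v) y) k" for k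
      using fun_cong[OF eq, of "((?v, []), k)"] by simp
    ultimately show False
      by blast
  qed
qed

lemma glue_into_free: "glue ` C \<subseteq> free_mod src tgt C UNIV"
proof clarify
  fix x assume x: "x \<in> C"
  define V where "V = fst ` {p. x p \<noteq> 0}"
  have "coords (ee v) (nn v) x = (\<lambda>_. 0)" if "v \<notin> V" for v
  proof
    fix l
    have "fst (ee v l) = v" if "l < nn v"
      using finite_subcomodule.e_in_N[OF subcomodule that] by simp
    then show "coords (ee v) (nn v) x l = 0"
      using \<open>v \<notin> V\<close> unfolding coords_def V_def by force
  qed
  then have "PHI v (coords (ee v) (nn v) x) = (\<lambda>_ _. 0)" if "v \<notin> V" for v
    using free_embedding_zero[OF embedding] that by simp
  then have "{i. glue x i \<noteq> (\<lambda>_. 0)} \<subseteq>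
      (\<Union>v\<in>V. (\<lambda>k. ((v, []), k)) ` {k. PHI v (coords (ee v) (nn v) x) k \<noteq> (\<lambda>_. 0)})"
    by (force simp: glue_def split: if_splits)
  moreover have "finite (\<Union>v\<in>V. (\<lambda>k. ((v, []), k)) ` {k. PHI v (coords (ee v) (nn v) x) k \<noteq> (\<lambda>_. 0)})"
  proof (rule finite_UN_I)
    show "finite V"
      using x unfolding mem_C V_def by blast
    fix v
    show "finite ((\<lambda>k. ((v, []), k)) ` {k. PHI v (coords (ee v) (nn v) x) k \<noteq> (\<lambda>_. 0)})"
      using free_embedding_finite_support[OF embedding coords_in_kn[of "ee v"]] by (rule finite_imageI)
  qed
  ultimately have "finite {i. glue x i \<noteq> (\<lambda>_. 0)}"
    by (rule finite_subset)
  moreover have "glue x (q, k) \<in> dual C" for q k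
    using free_embedding_in_dual[OF embedding coords_in_kn[of "ee (fst q)"]] zero_in_dual
    by (simp add: glue_def)
  ultimately show "glue x \<in> free_mod src tgt C UNIV"
    unfolding free_mod_def by (simp add: split_paired_all)
qed

lemma glue_add: "glue (\<lambda>p. x p + y p) = (\<lambda>i z. glue x i z + glue y i z)"
proof
  fix i :: "('v,'e) path \<times> nat"
  obtain q k where i: "i = (q, k)"
    by (cases i)
  have add: "PHI v (\<lambda>j. a j + b j) = (\<lambda>i z. PHI v a i z + PHI v b i z)"
    if "a \<in> kn (nn v)" "b \<in> kn (nn v)" for v a b
    using embedding[of v] that unfolding free_embedding_def by blast
  show "glue (\<lambda>p. x p + y p) i = (\<lambda>z. glue x i z + glue y i z)"
    using add[OF coords_in_kn[of "ee (fst q)"] coords_in_kn[of "ee (fst q)"]]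
    by (simp add: i glue_def coords_add)
qed

lemma glue_act:
  assumes "f \<in> dual C" "x \<in> C"
  shows "glue (lact src tgt C f x) = (\<lambda>i. conv src tgt C f (glue x i))"
proof
  fix i :: "('v,'e) path \<times> nat"
  obtain q k where i: "i = (q, k)"
    by (cases i)
  show "glue (lact src tgt C f x) i = conv src tgt C f (glue x i)"
  proof (cases "snd q = []")
    case True
    let ?v = "fst q"
    have "coords (ee ?v) (nn ?v) (lact src tgt C f x) =
        comod_act (coaction src tgt (ee ?v) (nn ?v)) f (coords (ee ?v) (nn ?v) x)"
      using finite_subcomodule.coaction_coords[OF subcomodule refl assms(2,1)] by simp
    then show ?thesis
      using free_embedding_act[OF embedding assms(1) coords_in_kn[of "ee ?v"]] True i
      by (simp add: glue_def)
  next
    case False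
    then show ?thesis
      using conv_zero_right[OF assms(1)] i by (simp add: glue_nontrivial)
  qed
qed

lemma free_embedding_glue:
  "free_embedding src tgt C C (\<lambda>x y p. x p + y p) (lact src tgt C) UNIV glue"
  unfolding free_embedding_def using glue_inj glue_into_free glue_add glue_act by blast

end

context monomial_coalg
begin

lemma left_qcF_if_left_fqcF:
  assumes fqcF: "left_fqcF src tgt C"
  shows "left_qcF src tgt C"
proof -
  let ?N = "\<lambda>v. {p \<in> B. fst p = v}"
  have "\<forall>v. \<exists>e. finite_subcomodule src tgt B C (?N v) e (card (?N v))"
  proof
    fix v
    have "\<And>a b. composable src tgt a b \<Longrightarrow> path_cat a b \<in> ?N v \<Longrightarrow> a \<in> ?N v"
      using basis_factors(1) by simp
    moreover have "?N v \<subseteq> B"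
      by blast
    ultimately obtain e where "finite_subcomodule src tgt B C (?N v) e (card (?N v))"
      using finite_subcomodule_exists[OF _ finite_basis_from[OF fqcF]] by blast
    then show "\<exists>e. finite_subcomodule src tgt B C (?N v) e (card (?N v))"
      by blast
  qed
  then obtain ee where ee: "\<forall>v. finite_subcomodule src tgt B C (?N v) (ee v) (card (?N v))"
    by (rule choice[THEN exE])
  have "\<forall>v. \<exists>I :: nat set. embeds_in_free src tgt C (kn (card (?N v))) (\<lambda>m m' j. m j + m' j)
           (comod_act (coaction src tgt (ee v) (card (?N v)))) I"
    using fqcF finite_subcomodule.right_comodule ee unfolding left_fqcF_def by blast
  then obtain I :: "'v \<Rightarrow> nat set" where "\<forall>v. embeds_in_free src tgt C (kn (card (?N v))) (\<lambda>m m' j. m j + m' j)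
           (comod_act (coaction src tgt (ee v) (card (?N v)))) (I v)"
    by (rule choice[THEN exE])
  then have "\<forall>v. \<exists>\<phi>. free_embedding src tgt C (kn (card (?N v))) (\<lambda>m m' j. m j + m' j)
           (comod_act (coaction src tgt (ee v) (card (?N v)))) (I v) \<phi>"
    unfolding embeds_in_free_iff .
  then obtain PHI where "\<forall>v. free_embedding src tgt C (kn (card (?N v))) (\<lambda>m m' j. m j + m' j)
           (comod_act (coaction src tgt (ee v) (card (?N v)))) (I v) (PHI v)"
    by (rule choice[THEN exE])
  then interpret vertexwise_embedding src tgt B C ee "\<lambda>v. card (?N v)" I PHI
    using ee monomial_coalg_axioms by (simp add: vertexwise_embedding_def vertexwise_embedding_axioms_def)
  show ?thesis
    unfolding left_qcF_def embeds_in_free_iff using free_embedding_glue by blast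
qed

end

theorem theorem4p8:
  fixes src tgt :: "'e \<Rightarrow> 'v" and C :: "(('v,'e) path \<Rightarrow> 'k::field) set"
  assumes "monomial_subcoalgebra src tgt C"
    and "left_fqcF src tgt C"
  shows "left_qcF src tgt C"
proof -
  obtain B where "B \<subseteq> {p. valid_path src tgt p}"
    and "C = {x \<in> path_coalg src tgt. \<forall>p. x p \<noteq> 0 \<longrightarrow> p \<in> B}"
    and "subcoalgebra src tgt C" and "\<And>v. path_vec (v, []) \<in> C"
    using assms(1) unfolding monomial_subcoalgebra_def by blast
  then interpret monomial_coalg src tgt B C
    by unfold_locales auto
  show ?thesis
    using assms(2) by (rule left_qcF_if_left_fqcF)
qed

end
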